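(* Let $(X,\mathcal B,\mu,T)$ be a measure preserving system (a probability space with a measurable map $T\colon X\to X$ preserving $\mu$), let $f\colon X\to[0,\infty]$ be a measurable function, and let $(s_n)_{n\ge1}$ be a two-jumpy scale sequence. Then the function $F(x)=\liminf_{n\to\infty} s_n f(T^n x)$ satisfies $\mu\big(F^{-1}(\{0,\infty\})\big)=1$.
   Context: A scale sequence is a sequence $(s_n)_{n\ge1}$ of positive reals with $s_n\to\infty$. It is two-jumpy if $s_{n+1}\ge s_n$ for all sufficiently large $n$ and $\liminf_{n\to\infty} s_{2n}/s_n>1$. *)

theory Defs
  imports "HOL-Probability.Probability"
begin

text \<open>Sequences are indexed by nat; the value at index 0 is ignored (the paper indexes from 1).\<close>

definition scale_sequence :: "(nat \<Rightarrow> real) \<Rightarrow> bool" where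
  "scale_sequence s \<longleftrightarrow> (\<forall>n\<ge>1. s n > 0) \<and> filterlim s at_top sequentially"

definition two_jumpy :: "(nat \<Rightarrow> real) \<Rightarrow> bool" where
  "two_jumpy s \<longleftrightarrow> (\<forall>\<^sub>F n in sequentially. s n \<le> s (Suc n))
     \<and> liminf (\<lambda>n. ereal (s (2 * n) / s n)) > 1"

definition measure_preserving_system :: "'a measure \<Rightarrow> ('a \<Rightarrow> 'a) \<Rightarrow> bool" where
  "measure_preserving_system M T \<longleftrightarrow>
     prob_space M \<and> T \<in> measurable M M \<and> distr M M T = M"

end

theory Submission
  imports Defs
begin

text \<open>
  Since \<open>s\<close> is eventually increasing, \<open>F \<circ> T \<le> F\<close>, so for \<open>0 < a < b\<close> the set \<open>U = {F > a}\<close>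
  is forward invariant up to a null set. Two-jumpiness gives \<open>P\<close> with \<open>s\<^sub>n \<ge> (b/a) s\<^sub>k\<close>
  whenever \<open>n \<ge> P k\<close>. If \<open>a < F x < b\<close> then \<open>s\<^sub>n f(T\<^sup>n x) < b\<close> for some large \<open>n\<close>, and then no
  orbit point \<open>T\<^sup>i x\<close> with \<open>N \<le> n - i \<le> n / P\<close> can satisfy \<open>s\<^sub>k f(T\<^sup>k (T\<^sup>i x)) \<ge> a\<close> for all
  \<open>k \<ge> N\<close>. Hence a proportion \<open>1/(2P)\<close> of the first \<open>n\<close> orbit points lies in the set \<open>D\<^sub>N\<close> of
  points of \<open>U\<close> violating this, and a maximal inequality bounds \<open>\<mu>{a < F < b}\<close> by
  \<open>2P \<mu>(D\<^sub>N)\<close>, which tends to \<open>0\<close> as \<open>N \<rightarrow> \<infinity>\<close>. Countably many intervals \<open>(a, b)\<close> exhaust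
  \<open>(0, \<infinity>)\<close>.
\<close>

lemma card_dense_block_starts_le_sum:
  fixes d :: "nat \<Rightarrow> real" and \<theta> :: real and L :: nat
  assumes d_nonneg: "\<And>t. 0 \<le> d t" and \<theta>: "0 \<le> \<theta>"
  defines "e \<equiv> \<lambda>t. \<exists>b\<in>{1..L}. \<theta> * b \<le> (\<Sum>i\<in>{t..<t+b}. d i)"
  shows "\<theta> * card {t\<in>{s..<J}. e t} \<le> (\<Sum>i\<in>{s..<J+L}. d i)"
proof (induction "J - s" arbitrary: s rule: less_induct)
  case less
  show ?case
  proof (cases "s < J")
    case False
    then have "{t\<in>{s..<J}. e t} = {}" by auto
    then show ?thesis by (simp only: card.empty) (simp add: d_nonneg sum_nonneg)
  next
    case sJ: True
    show ?thesis
    proof (cases "e s")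
      case False
      then have "{t\<in>{s..<J}. e t} = {t\<in>{Suc s..<J}. e t}"
        using le_eq_less_or_eq by (auto simp: Suc_le_eq)
      moreover have "\<theta> * card {t\<in>{Suc s..<J}. e t} \<le> (\<Sum>i\<in>{Suc s..<J+L}. d i)"
        using less sJ by auto
      moreover have "(\<Sum>i\<in>{Suc s..<J+L}. d i) \<le> (\<Sum>i\<in>{s..<J+L}. d i)"
        by (rule sum_mono2) (auto simp: d_nonneg)
      ultimately show ?thesis by simp
    next
      case True
      \<comment> \<open>Greedy covering: the dense block starting at \<open>s\<close> pays for every start inside it.\<close>
      then obtain b where b: "b \<in> {1..L}" "\<theta> * b \<le> (\<Sum>i\<in>{s..<s+b}. d i)"
        unfolding e_def by blast
      have IH: "\<theta> * card {t\<in>{s+b..<J}. e t} \<le> (\<Sum>i\<in>{s+b..<J+L}. d i)"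
        using less sJ b by auto
      have "card {t\<in>{s..<J}. e t} \<le> card ({s..<s+b} \<union> {t\<in>{s+b..<J}. e t})"
        by (rule card_mono) auto
      also have "\<dots> \<le> b + card {t\<in>{s+b..<J}. e t}"
        using card_Un_le[of "{s..<s+b}"] by simp
      finally have "\<theta> * card {t\<in>{s..<J}. e t} \<le> \<theta> * (b + card {t\<in>{s+b..<J}. e t})"
        using \<theta> by (intro mult_left_mono) (simp_all only: of_nat_add [symmetric] of_nat_le_iff)
      also have "\<dots> \<le> (\<Sum>i\<in>{s..<s+b}. d i) + (\<Sum>i\<in>{s+b..<J+L}. d i)"
        using IH b(2) by (simp add: distrib_left)
      also have "\<dots> = (\<Sum>i\<in>{s..<J+L}. d i)"
        using b sJ by (intro sum.atLeastLessThan_concat) auto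
      finally show ?thesis .
    qed
  qed
qed

lemma ennreal_le_scaled_mult:
  fixes a b u v :: real and c :: ennreal
  assumes "b / a * u \<le> v" "0 \<le> u" "0 < a" "a < b"
    and "ennreal a \<le> ennreal u * c"
  shows "ennreal b \<le> ennreal v * c"
proof -
  have "ennreal b = ennreal (b / a) * ennreal a"
    using assms(3,4) by (simp flip: ennreal_mult)
  also have "\<dots> \<le> ennreal (b / a) * (ennreal u * c)"
    using assms(5) by (rule mult_left_mono) simp
  also have "\<dots> = ennreal (b / a * u) * c"
    using assms(2-4) by (subst ennreal_mult) (auto simp: mult.assoc)
  also have "\<dots> \<le> ennreal v * c"
    using assms(1) by (intro mult_right_mono ennreal_leI) auto
  finally show ?thesis .
qed

lemma card_late_failures_ge:
  fixes s :: "nat \<Rightarrow> real" and h :: "nat \<Rightarrow> ennreal" and P N n :: nat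
  assumes dominates: "\<And>k m. N \<le> k \<Longrightarrow> P * k \<le> m \<Longrightarrow> b / a * s k \<le> s m"
    and s_nonneg: "\<And>k. N \<le> k \<Longrightarrow> 0 \<le> s k"
    and ab: "0 < a" "a < b" and PN: "1 \<le> P" "1 \<le> N" "2 * P * N \<le> n"
    and small: "ennreal (s n) * h n < ennreal b"
  shows "real n / (2 * P) \<le> card {i\<in>{..<n}. \<exists>k\<ge>N. ennreal (s k) * h (i + k) < ennreal a}"
proof -
  define q where "q = n div P"
  have "2 * N \<le> q"
    using PN by (simp add: q_def less_eq_div_iff_mult_less_eq mult.commute mult.left_commute)
  have "P * q \<le> n" "n < P * (q + 1)"
    using PN(1) mod_less_divisor[of P n] mult_div_mod_eq[of P n]
    unfolding q_def distrib_left by linarith+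
  have "q \<le> n" unfolding q_def by simp
  have "{n - q..n - N} \<subseteq> {i\<in>{..<n}. \<exists>k\<ge>N. ennreal (s k) * h (i + k) < ennreal a}"
  proof safe
    fix i assume i: "i \<in> {n - q..n - N}"
    have "N \<le> n" using \<open>2 * N \<le> q\<close> \<open>q \<le> n\<close> by linarith
    with i PN(2) show "i < n" by auto
    from i \<open>N \<le> n\<close> \<open>q \<le> n\<close> have "n - i \<le> q" "N \<le> n - i" "i + (n - i) = n"
      by auto
    then have k: "N \<le> n - i" "P * (n - i) \<le> n" "i + (n - i) = n"
      using \<open>P * q \<le> n\<close> by (auto intro: le_trans[OF mult_le_mono2])
    have "\<not> ennreal a \<le> ennreal (s (n - i)) * h n"
      using ennreal_le_scaled_mult[where c = "h n", OF dominates[OF k(1,2)] s_nonneg[OF k(1)] ab] small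
      by (meson leD)
    then have "ennreal (s (n - i)) * h (i + (n - i)) < ennreal a"
      using k(3) by (simp add: not_le)
    with k(1) show "\<exists>k\<ge>N. ennreal (s k) * h (i + k) < ennreal a" by blast
  qed
  then have "card {n - q..n - N} \<le> card {i\<in>{..<n}. \<exists>k\<ge>N. ennreal (s k) * h (i + k) < ennreal a}"
    by (intro card_mono) auto
  moreover have "card {n - q..n - N} = q - N + 1"
    using \<open>2 * N \<le> q\<close> \<open>q \<le> n\<close> by simp
  moreover have "real n / (2 * P) \<le> real (q - N + 1)"
  proof -
    have "real n < real P * (real q + 1)"
      using \<open>n < P * (q + 1)\<close> by (metis of_nat_1 of_nat_add of_nat_less_iff of_nat_mult)
    then have "real n / (2 * P) < (real q + 1) / 2"
      using PN(1) by (simp add: field_simps)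
    also have "\<dots> \<le> real (q - N + 1)"
      using \<open>2 * N \<le> q\<close> by (simp add: of_nat_diff)
    finally show ?thesis by simp
  qed
  ultimately show ?thesis by linarith
qed

lemma power_mult_le_iterated_doubling:
  fixes s :: "nat \<Rightarrow> real"
  assumes doubling: "\<And>n. n0 \<le> n \<Longrightarrow> lam * s n \<le> s (2 * n)" and "0 \<le> lam" and "n0 \<le> k"
  shows "lam ^ j * s k \<le> s (2 ^ j * k)"
proof (induction j)
  case (Suc j)
  have "n0 \<le> 2 ^ j * k"
    using \<open>n0 \<le> k\<close> by (metis le_trans mult_le_mono1 mult_1 one_le_power one_le_numeral)
  have "lam ^ Suc j * s k \<le> lam * s (2 ^ j * k)"
    using Suc \<open>0 \<le> lam\<close> by (simp add: mult.assoc mult_left_mono)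
  also have "\<dots> \<le> s (2 ^ Suc j * k)"
    using doubling[OF \<open>n0 \<le> 2 ^ j * k\<close>] by (simp add: mult.assoc)
  finally show ?case .
qed simp

lemma two_jumpy_doubling:
  assumes "scale_sequence s" "two_jumpy s"
  obtains lam where "1 < lam" "\<forall>\<^sub>F n in sequentially. lam * s n \<le> s (2 * n)"
proof -
  obtain lam :: real where lam: "1 < ereal lam" "ereal lam < liminf (\<lambda>n. ereal (s (2 * n) / s n))"
    using assms(2) ereal_dense2 unfolding two_jumpy_def by blast
  have "\<forall>\<^sub>F n in sequentially. 0 < s n"
    using assms(1) unfolding scale_sequence_def eventually_sequentially by auto
  with less_LiminfD[OF lam(2)] have "\<forall>\<^sub>F n in sequentially. lam * s n \<le> s (2 * n)"
    by eventually_elim (simp add: field_simps)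
  with lam(1) that show ?thesis by simp
qed

lemma two_jumpy_dominates_dilations:
  assumes "scale_sequence s" "two_jumpy s"
  obtains P :: nat where "1 \<le> P" "\<forall>\<^sub>F k in sequentially. \<forall>n\<ge>P * k. c * s k \<le> s n"
proof -
  obtain lam where lam: "1 < lam" "\<forall>\<^sub>F n in sequentially. lam * s n \<le> s (2 * n)"
    using two_jumpy_doubling[OF assms] .
  have "\<forall>\<^sub>F n in sequentially. 0 < s n" "\<forall>\<^sub>F n in sequentially. s n \<le> s (Suc n)"
    using assms unfolding scale_sequence_def two_jumpy_def eventually_sequentially by auto
  with lam(2) have "\<forall>\<^sub>F n in sequentially. lam * s n \<le> s (2 * n) \<and> s n \<le> s (Suc n) \<and> 0 < s n"
    by eventually_elim auto
  then obtain n0 where n0: "\<And>n. n0 \<le> n \<Longrightarrow> lam * s n \<le> s (2 * n) \<and> s n \<le> s (Suc n) \<and> 0 < s n"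
    unfolding eventually_sequentially by blast
  have mono: "s m \<le> s n" if "n0 \<le> m" "m \<le> n" for m n
    using that(2)
  proof (induction n rule: dec_induct)
    case (step n)
    then show ?case using n0[of n] that(1) by force
  qed simp
  obtain j where j: "c < lam ^ j" using real_arch_pow[OF lam(1)] by blast
  have "c * s k \<le> s n" if "n0 \<le> k" "2 ^ j * k \<le> n" for k n
  proof -
    have "c * s k \<le> lam ^ j * s k" using j n0[OF that(1)] by (intro mult_right_mono) auto
    also have "\<dots> \<le> s (2 ^ j * k)"
      using n0 lam(1) that(1) by (intro power_mult_le_iterated_doubling[of n0]) auto
    also have "\<dots> \<le> s n"
      using that by (intro mono) (auto intro: le_trans[OF _ mult_le_mono1[of 1 "2 ^ j" k], simplified])
    finally show ?thesis .
  qed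
  then have "\<forall>\<^sub>F k in sequentially. \<forall>n\<ge>2 ^ j * k. c * s k \<le> s n"
    unfolding eventually_sequentially by blast
  then show ?thesis using that[of "2 ^ j"] by simp
qed

lemma liminf_scaled_shift_le:
  fixes s :: "nat \<Rightarrow> real" and h :: "nat \<Rightarrow> ennreal"
  assumes "\<forall>\<^sub>F n in sequentially. s n \<le> s (Suc n)"
  shows "liminf (\<lambda>n. ennreal (s n) * h (Suc n)) \<le> liminf (\<lambda>n. ennreal (s n) * h n)"
proof -
  have "liminf (\<lambda>n. ennreal (s n) * h (Suc n)) \<le> liminf (\<lambda>n. ennreal (s (Suc n)) * h (Suc n))"
    using assms by (intro Liminf_mono) (auto elim!: eventually_mono intro: mult_right_mono ennreal_leI)
  also have "\<dots> = liminf (\<lambda>n. ennreal (s n) * h n)"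
    using liminf_shift[of "\<lambda>n. ennreal (s n) * h n"] by simp
  finally show ?thesis .
qed

lemma (in prob_space) emeasure_eq_0_or_top_eq_1:
  fixes F :: "'a \<Rightarrow> ennreal"
  assumes [measurable]: "F \<in> borel_measurable M"
    and between: "\<And>a b. 0 < a \<Longrightarrow> a < b \<Longrightarrow> emeasure M {x\<in>space M. ennreal a < F x \<and> F x < ennreal b} = 0"
  shows "emeasure M {x\<in>space M. F x = 0 \<or> F x = \<infinity>} = 1"
proof -
  have "{x\<in>space M. ennreal (1 / Suc (Suc n)) < F x \<and> F x < ennreal (Suc n)} \<in> null_sets M"
    for n :: nat
    by (intro null_setsI between) (auto intro: less_le_trans[of _ 1])
  then have "AE x in M. \<not> (ennreal (1 / Suc (Suc n)) < F x \<and> F x < ennreal (Suc n))" for n :: nat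
    by (rule AE_I') auto
  then have "AE x in M. \<forall>n::nat. \<not> (ennreal (1 / Suc (Suc n)) < F x \<and> F x < ennreal (Suc n))"
    by (simp add: AE_all_countable)
  then have "AE x in M. F x = 0 \<or> F x = \<infinity>"
  proof eventually_elim
    fix x assume none: "\<forall>n::nat. \<not> (ennreal (1 / Suc (Suc n)) < F x \<and> F x < ennreal (Suc n))"
    show "F x = 0 \<or> F x = \<infinity>"
    proof (rule ccontr)
      assume "\<not> ?thesis"
      then obtain r where r: "F x = ennreal r" "0 < r"
        by (cases "F x") (auto simp: zero_less_iff_neq_zero)
      obtain n :: nat where n: "max r (1 / r) < n" using reals_Archimedean2 by blast
      then have bounds: "1 / Suc (Suc n) < r" "r < Suc n"
        using r(2) by (auto simp: field_simps)
      have "ennreal (1 / Suc (Suc n)) < F x"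
        unfolding r(1) by (rule ennreal_lessI) (use r(2) bounds in auto)
      moreover have "F x < ennreal (Suc n)"
        unfolding r(1) by (rule ennreal_lessI) (use bounds in auto)
      ultimately show False using none by blast
    qed
  qed
  then show ?thesis by (intro emeasure_eq_1_AE) auto
qed

locale mpt = prob_space M for M :: "'a measure" +
  fixes T :: "'a \<Rightarrow> 'a"
  assumes measurable_T [measurable]: "T \<in> M \<rightarrow>\<^sub>M M"
    and distr_T: "distr M M T = M"

lemma measure_preserving_system_imp_mpt: "measure_preserving_system M T \<Longrightarrow> mpt M T"
  unfolding measure_preserving_system_def by (auto intro: mpt.intro mpt_axioms.intro)

context mpt
begin

lemma measurable_funpow [measurable]: "T ^^ n \<in> M \<rightarrow>\<^sub>M M"
  by (rule measurable_compose_n[OF measurable_T])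

lemma distr_funpow: "distr M M (T ^^ n) = M"
proof (induction n)
  case (Suc n)
  have "distr M M (T ^^ Suc n) = distr (distr M M (T ^^ n)) M T"
    by (simp add: distr_distr comp_def)
  also have "\<dots> = M"
    using Suc distr_T by simp
  finally show ?case .
qed (simp add: distr_id[unfolded id_def] id_def)

lemma emeasure_funpow_vimage: "A \<in> sets M \<Longrightarrow> emeasure M ((T ^^ n) -` A \<inter> space M) = emeasure M A"
  using emeasure_distr[OF measurable_funpow, of A n] by (simp add: distr_funpow)

lemma integral_indicator_funpow:
  assumes "A \<in> sets M"
  shows "(\<integral>x. indicator A ((T ^^ n) x) \<partial>M) = (measure M A :: real)"
  using integral_distr[OF measurable_funpow, of "indicator A :: 'a \<Rightarrow> real" n] assms
  by (simp add: distr_funpow)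

lemma AE_orbit_in_subinvariant:
  assumes U [measurable]: "U \<in> sets M" and sub: "T -` U \<inter> space M \<subseteq> U"
  shows "AE x in M. x \<in> U \<longrightarrow> (\<forall>m. (T ^^ m) x \<in> U)"
proof -
  define V where "V = T -` U \<inter> space M"
  have V [measurable]: "V \<in> sets M" unfolding V_def by measurable
  have "emeasure M (U - V) = 0"
    using emeasure_Diff[OF _ U V sub[folded V_def]] emeasure_funpow_vimage[OF U, of 1]
    by (simp add: V_def)
  then have null: "(T ^^ m) -` (U - V) \<inter> space M \<in> null_sets M" for m
    using emeasure_funpow_vimage[of "U - V" m] by auto
  show ?thesis
  proof (rule AE_I')
    show "(\<Union>m. (T ^^ m) -` (U - V) \<inter> space M) \<in> null_sets M"
      using null by (rule null_sets_UN)
    have "(T ^^ m) x \<in> U" if "x \<in> space M" "x \<in> U" "\<forall>m. (T ^^ m) x \<notin> U - V" for x m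
      using that by (induction m) (auto simp: V_def)
    then show "{x \<in> space M. \<not> (x \<in> U \<longrightarrow> (\<forall>m. (T ^^ m) x \<in> U))}
        \<subseteq> (\<Union>m. (T ^^ m) -` (U - V) \<inter> space M)"
      by blast
  qed
qed

lemma card_dense_visits_le_birkhoff_sum:
  fixes \<theta> :: real and L :: nat and D :: "'a set"
  assumes "x \<in> space M" and "0 \<le> \<theta>"
  defines "E \<equiv> {x\<in>space M. \<exists>c\<in>{1..L}. \<theta> * c \<le> (\<Sum>i<c. indicator D ((T ^^ i) x))}"
  shows "\<theta> * card {t\<in>{..<J}. (T ^^ t) x \<in> E} \<le> (\<Sum>i<J+L. indicator D ((T ^^ i) x))"
proof -
  define d where "d i = (indicator D ((T ^^ i) x) :: real)" for i
  have "(\<Sum>i<c. indicator D ((T ^^ i) ((T ^^ t) x))) = (\<Sum>i\<in>{t..<t+c}. d i)" for c t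
    using sum.shift_bounds_nat_ivl[of d 0 t c]
    by (simp add: d_def funpow_add lessThan_atLeast0 add.commute)
  then have visits: "(T ^^ t) x \<in> E \<longleftrightarrow> (\<exists>c\<in>{1..L}. \<theta> * c \<le> (\<Sum>i\<in>{t..<t+c}. d i))" for t
    using measurable_space[OF measurable_funpow \<open>x \<in> space M\<close>] unfolding E_def by auto
  have "\<theta> * card {t\<in>{0..<J}. (T ^^ t) x \<in> E} \<le> (\<Sum>i\<in>{0..<J+L}. d i)"
    unfolding visits using \<open>0 \<le> \<theta>\<close> by (intro card_dense_block_starts_le_sum) (auto simp: d_def)
  then show ?thesis by (simp add: d_def lessThan_atLeast0)
qed

lemma maximal_inequality_bounded:
  fixes \<theta> :: real and L :: nat
  assumes D [measurable]: "D \<in> sets M" and \<theta>: "0 < \<theta>"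
  defines "E \<equiv> {x\<in>space M. \<exists>c\<in>{1..L}. \<theta> * c \<le> (\<Sum>i<c. indicator D ((T ^^ i) x))}"
  shows "\<theta> * measure M E \<le> measure M D"
proof -
  have E [measurable]: "E \<in> sets M" unfolding E_def by measurable
  have integrable: "integrable M (\<lambda>x. indicator A ((T ^^ t) x) :: real)" if "A \<in> sets M" for A t
    using that by (intro integrable_const_bound[where B=1]) auto
  have "real J * (\<theta> * measure M E) \<le> real (J + L) * measure M D" for J
  proof -
    have "(\<Sum>t<J. indicator E ((T ^^ t) x) :: real) = card {t\<in>{..<J}. (T ^^ t) x \<in> E}" for x
      unfolding indicator_def by (subst sum_of_bool_eq) (simp_all add: Int_def)
    then have pointwise:
      "\<theta> * (\<Sum>t<J. indicator E ((T ^^ t) x)) \<le> (\<Sum>i<J+L. indicator D ((T ^^ i) x) :: real)"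
      if "x \<in> space M" for x
      using card_dense_visits_le_birkhoff_sum[OF that less_imp_le[OF \<theta>]] by (simp add: E_def)
    have "real J * (\<theta> * measure M E) = (\<integral>x. \<theta> * (\<Sum>t<J. indicator E ((T ^^ t) x)) \<partial>M)"
      by (simp add: integrable integral_indicator_funpow)
    also have "\<dots> \<le> (\<integral>x. (\<Sum>i<J+L. indicator D ((T ^^ i) x)) \<partial>M)"
      using pointwise by (intro integral_mono) (auto simp: integrable)
    also have "\<dots> = real (J + L) * measure M D"
      by (simp add: integrable integral_indicator_funpow)
    finally show ?thesis .
  qed
  then have "\<forall>\<^sub>F J in sequentially. \<theta> * measure M E \<le> (1 + real L / real J) * measure M D"
    unfolding eventually_sequentially by (intro exI[of _ 1] allI impI) (simp add: field_simps)
  moreover have "(\<lambda>J. (1 + real L / real J) * measure M D) \<longlonglongrightarrow> (1 + 0) * measure M D"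
    by (intro tendsto_intros lim_const_over_n)
  ultimately show ?thesis
    using Lim_bounded2 by (metis (no_types, lifting) eventually_sequentially mult_1 add_0_right)
qed

lemma maximal_inequality:
  fixes \<theta> :: real
  assumes D [measurable]: "D \<in> sets M" and \<theta>: "0 < \<theta>"
  shows "\<theta> * measure M {x\<in>space M. \<exists>c\<ge>1. \<theta> * c \<le> (\<Sum>i<c. indicator D ((T ^^ i) x))} \<le> measure M D"
proof -
  define E where "E L = {x\<in>space M. \<exists>c\<in>{1..L}. \<theta> * c \<le> (\<Sum>i<c. indicator D ((T ^^ i) x))}" for L
  have "E L \<in> sets M" for L unfolding E_def by measurable
  moreover have "incseq E" unfolding incseq_def E_def by force
  ultimately have "(\<lambda>L. \<theta> * measure M (E L)) \<longlonglongrightarrow> \<theta> * measure M (\<Union>L. E L)"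
    by (intro tendsto_mult_left Lim_measure_incseq) auto
  moreover have "(\<Union>L. E L) = {x\<in>space M. \<exists>c\<ge>1. \<theta> * c \<le> (\<Sum>i<c. indicator D ((T ^^ i) x))}"
    unfolding E_def by force
  ultimately show ?thesis
    using maximal_inequality_bounded[OF D \<theta>] by (metis (no_types, lifting) E_def LIMSEQ_le_const2)
qed

lemma birkhoff_sum_late_failures_ge:
  fixes f :: "'a \<Rightarrow> ennreal" and s :: "nat \<Rightarrow> real" and a b :: real and P N :: nat
  defines "F \<equiv> \<lambda>x. liminf (\<lambda>n. ennreal (s n) * f ((T ^^ n) x))"
  defines "D \<equiv> {y\<in>space M. ennreal a < F y \<and> (\<exists>k\<ge>N. ennreal (s k) * f ((T ^^ k) y) < ennreal a)}"
  assumes dominates: "\<And>k m. N \<le> k \<Longrightarrow> P * k \<le> m \<Longrightarrow> b / a * s k \<le> s m"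
    and s_nonneg: "\<And>k. N \<le> k \<Longrightarrow> 0 \<le> s k"
    and ab: "0 < a" "a < b" and PN: "1 \<le> P" "1 \<le> N"
    and x: "x \<in> space M" and orbit: "\<And>m. ennreal a < F ((T ^^ m) x)" and "F x < ennreal b"
  shows "\<exists>n\<ge>1. real n / (2 * P) \<le> (\<Sum>i<n. indicator D ((T ^^ i) x))"
proof -
  have "\<exists>n\<ge>2 * P * N. ennreal (s n) * f ((T ^^ n) x) < ennreal b"
  proof (rule ccontr)
    assume "\<not> ?thesis"
    then have "\<forall>\<^sub>F n in sequentially. ennreal b \<le> ennreal (s n) * f ((T ^^ n) x)"
      unfolding eventually_sequentially by (auto simp: not_less)
    then have "ennreal b \<le> F x" unfolding F_def by (rule Liminf_bounded)
    with \<open>F x < ennreal b\<close> show False by simp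
  qed
  then obtain n where n: "2 * P * N \<le> n" "ennreal (s n) * f ((T ^^ n) x) < ennreal b"
    by blast
  have shift: "(T ^^ (i + k)) x = (T ^^ k) ((T ^^ i) x)" for i k
    by (metis add.commute comp_apply funpow_add)
  have "(T ^^ i) x \<in> D \<longleftrightarrow> (\<exists>k\<ge>N. ennreal (s k) * f ((T ^^ (i + k)) x) < ennreal a)" for i
    using orbit measurable_space[OF measurable_funpow x] unfolding D_def shift by blast
  then have "(\<Sum>i<n. indicator D ((T ^^ i) x)) =
      real (card {i\<in>{..<n}. \<exists>k\<ge>N. ennreal (s k) * f ((T ^^ (i + k)) x) < ennreal a})"
    unfolding indicator_def by (subst sum_of_bool_eq) (simp_all add: Int_def)
  moreover have "real n / (2 * P) \<le>
      card {i\<in>{..<n}. \<exists>k\<ge>N. ennreal (s k) * f ((T ^^ (i + k)) x) < ennreal a}"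
    by (rule card_late_failures_ge[where h = "\<lambda>j. f ((T ^^ j) x)"])
      (use dominates s_nonneg ab PN n in auto)
  moreover have "1 \<le> 2 * P * N"
    using PN by simp
  then have "1 \<le> n"
    using n(1) by (rule le_trans)
  ultimately show ?thesis by auto
qed

lemma measure_liminf_between_le_late_failures:
  fixes f :: "'a \<Rightarrow> ennreal" and s :: "nat \<Rightarrow> real" and a b :: real and P N :: nat
  assumes f [measurable]: "f \<in> borel_measurable M"
    and s_mono: "\<forall>\<^sub>F n in sequentially. s n \<le> s (Suc n)"
    and dominates: "\<And>k m. N \<le> k \<Longrightarrow> P * k \<le> m \<Longrightarrow> b / a * s k \<le> s m"
    and s_nonneg: "\<And>k. N \<le> k \<Longrightarrow> 0 \<le> s k"
    and ab: "0 < a" "a < b" and PN: "1 \<le> P" "1 \<le> N"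
  defines "F \<equiv> \<lambda>x. liminf (\<lambda>n. ennreal (s n) * f ((T ^^ n) x))"
  shows "measure M {x\<in>space M. ennreal a < F x \<and> F x < ennreal b} \<le>
    2 * P * measure M {y\<in>space M. ennreal a < F y \<and> (\<exists>k\<ge>N. ennreal (s k) * f ((T ^^ k) y) < ennreal a)}"
    (is "measure M ?A \<le> 2 * P * measure M ?D")
proof -
  define \<theta> where "\<theta> = 1 / (2 * real P)"
  have \<theta>: "0 < \<theta>" using PN(1) by (simp add: \<theta>_def)
  define U where "U = {x\<in>space M. ennreal a < F x}"
  define E where "E = {x\<in>space M. \<exists>c\<ge>1. \<theta> * c \<le> (\<Sum>i<c. indicator ?D ((T ^^ i) x))}"
  have [measurable]: "F \<in> borel_measurable M" unfolding F_def by measurable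
  have [measurable]: "?A \<in> sets M" "?D \<in> sets M" "U \<in> sets M" "E \<in> sets M"
    unfolding U_def E_def by measurable
  have "F (T x) \<le> F x" for x
    using liminf_scaled_shift_le[OF s_mono, of "\<lambda>n. f ((T ^^ n) x)"]
    unfolding F_def by (simp add: funpow_Suc_right del: funpow.simps)
  then have "T -` U \<inter> space M \<subseteq> U"
    unfolding U_def using measurable_space[OF measurable_T] by (auto intro: less_le_trans)
  then have "AE x in M. x \<in> U \<longrightarrow> (\<forall>m. (T ^^ m) x \<in> U)"
    by (rule AE_orbit_in_subinvariant[rotated]) measurable
  then have "AE x in M. x \<in> ?A \<longrightarrow> x \<in> E"
  proof (eventually_elim, intro impI)
    fix x assume orbit: "x \<in> U \<longrightarrow> (\<forall>m. (T ^^ m) x \<in> U)" and "x \<in> ?A"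
    then have "\<exists>n\<ge>1. real n / (2 * P) \<le> (\<Sum>i<n. indicator ?D ((T ^^ i) x))"
      unfolding F_def using dominates s_nonneg ab PN
      by (intro birkhoff_sum_late_failures_ge) (auto simp: U_def F_def)
    then show "x \<in> E"
      unfolding E_def \<theta>_def using \<open>x \<in> ?A\<close> by auto
  qed
  then have "measure M ?A \<le> measure M E"
    using emeasure_mono_AE[of ?A E M] by (simp add: emeasure_eq_measure)
  also have "\<dots> \<le> 2 * P * measure M ?D"
    using maximal_inequality[of ?D \<theta>] \<theta> PN(1) unfolding E_def by (simp add: \<theta>_def field_simps)
  finally show ?thesis .
qed

lemma emeasure_liminf_between_eq_0:
  fixes f :: "'a \<Rightarrow> ennreal" and s :: "nat \<Rightarrow> real" and a b :: real
  assumes f [measurable]: "f \<in> borel_measurable M" and s: "scale_sequence s" "two_jumpy s"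
    and ab: "0 < a" "a < b"
  defines "F \<equiv> \<lambda>x. liminf (\<lambda>n. ennreal (s n) * f ((T ^^ n) x))"
  shows "emeasure M {x\<in>space M. ennreal a < F x \<and> F x < ennreal b} = 0"
    (is "emeasure M ?A = 0")
proof -
  obtain P :: nat where P: "1 \<le> P" "\<forall>\<^sub>F k in sequentially. \<forall>n\<ge>P * k. b / a * s k \<le> s n"
    using two_jumpy_dominates_dilations[OF s] .
  define D where "D N = {y\<in>space M. ennreal a < F y \<and> (\<exists>k\<ge>N. ennreal (s k) * f ((T ^^ k) y) < ennreal a)}"
    for N
  have [measurable]: "D N \<in> sets M" for N unfolding D_def F_def by measurable
  have "\<forall>\<^sub>F k in sequentially. 0 \<le> s k"
    using s(1) unfolding scale_sequence_def eventually_sequentially by (auto intro: less_imp_le)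
  then have "\<forall>\<^sub>F N in sequentially. \<forall>k\<ge>N. 0 \<le> s k"
    by (rule eventually_all_ge_at_top)
  with eventually_all_ge_at_top[OF P(2)] eventually_ge_at_top[of 1]
  have "\<forall>\<^sub>F N in sequentially. measure M ?A \<le> 2 * P * measure M (D N)"
  proof eventually_elim
    case (elim N)
    then show ?case
      unfolding D_def F_def using s(2) ab P(1) unfolding two_jumpy_def
      by (intro measure_liminf_between_le_late_failures) auto
  qed
  moreover have "(\<lambda>N. 2 * P * measure M (D N)) \<longlonglongrightarrow> 0"
  proof -
    have "decseq D"
      by (rule decseq_SucI) (auto simp: D_def dest: Suc_leD)
    then have "(\<lambda>N. measure M (D N)) \<longlonglongrightarrow> measure M (\<Inter>N. D N)"
      by (intro Lim_measure_decseq) auto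
    moreover have "(\<Inter>N. D N) = {}"
    proof safe
      fix y assume "y \<in> (\<Inter>N. D N)"
      then have "ennreal a < F y" "\<forall>N. \<exists>k\<ge>N. ennreal (s k) * f ((T ^^ k) y) < ennreal a"
        by (auto simp: D_def)
      then show "y \<in> {}"
        using less_LiminfD[OF \<open>ennreal a < F y\<close>[unfolded F_def]]
        unfolding eventually_sequentially by (meson less_le_not_le)
    qed
    ultimately have "(\<lambda>N. measure M (D N)) \<longlonglongrightarrow> 0"
      by simp
    then show ?thesis
      by (rule tendsto_mult_right_zero)
  qed
  ultimately have "measure M ?A \<le> 0"
    using tendsto_lowerbound trivial_limit_sequentially by blast
  then show ?thesis
    by (simp add: emeasure_eq_measure measure_le_0_iff)
qed

end

theorem theorem3p6:
  fixes M :: "'a measure" and T :: "'a \<Rightarrow> 'a" and f :: "'a \<Rightarrow> ennreal" and s :: "nat \<Rightarrow> real"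
  assumes "measure_preserving_system M T"
    and "f \<in> borel_measurable M"
    and "scale_sequence s" and "two_jumpy s"
  defines "F \<equiv> (\<lambda>x. liminf (\<lambda>n. ennreal (s n) * f ((T ^^ n) x)))"
  shows "emeasure M {x \<in> space M. F x = 0 \<or> F x = \<infinity>} = 1"
proof -
  interpret mpt M T
    using assms(1) by (rule measure_preserving_system_imp_mpt)
  show ?thesis
  proof (rule emeasure_eq_0_or_top_eq_1)
    show "F \<in> borel_measurable M"
      unfolding F_def using assms(2) by measurable
    show "emeasure M {x\<in>space M. ennreal a < F x \<and> F x < ennreal b} = 0" if "0 < a" "a < b" for a b
      unfolding F_def using assms(2-4) that by (rule emeasure_liminf_between_eq_0)
  qed
qed

end
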